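(* Let $S$ be a $\Gamma$-hemiring and let $I$ be a prime h-ideal of $S$. Then for every $x\in S$ with $x\notin I$, $\langle x,\lambda_I\rangle=\lambda_I$.
   Context: A $\Gamma$-hemiring is a pair of additive commutative semigroups with zero $S$ and $\Gamma$ with a map $S\times\Gamma\times S\to S$, $(a,\alpha,b)\mapsto a\alpha b$, such that for all $a,b,c\in S$, $\alpha,\beta\in\Gamma$: $(a+b)\alpha c=a\alpha c+b\alpha c$; $a\alpha(b+c)=a\alpha b+a\alpha c$; $a(\alpha+\beta)b=a\alpha b+a\beta b$; $a\alpha(b\beta c)=(a\alpha b)\beta c$; $0\alpha a=0=a\alpha0$; $a0b=0=b0a$. An ideal of $S$ is a non-empty subset $A$ closed under addition with $s\gamma a\in A$ and $a\gamma s\in A$ for all $s\in S$, $a\in A$, $\gamma\in\Gamma$; it is an h-ideal if for all $x,z\in S$ and $a,b\in A$, $x+a+z=b+z$ implies $x\in A$. A proper h-ideal $I$ is prime if for any h-ideals $H,K$ of $S$, $H\Gamma K\subseteq I$ (where $H\Gamma K$ is the set of finite sums of elements $h\gamma k$, $h\in H$, $\gamma\in\Gamma$, $k\in K$) implies $H\subseteq I$ or $K\subseteq I$. $\lambda_I$ is the characteristic function of $I$. For a fuzzy subset $\mu:S\to[0,1]$ and $x\in S$, $\langle x,\mu\rangle(y)=\inf_{s\in S,\ \alpha,\gamma\in\Gamma}\mu(x\alpha s\gamma y)$. *)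

theory Defs
  imports Main "HOL-Library.Indicator_Function" Complex_Main
begin

text \<open>A Gamma-hemiring: S is the carrier type 'a (a commutative additive monoid,
  i.e. commutative semigroup with zero), Gamma is the type 'g, and
  m a \<alpha> b stands for a\<alpha>b.\<close>

definition gamma_hemiring :: "('a::comm_monoid_add \<Rightarrow> 'g::comm_monoid_add \<Rightarrow> 'a \<Rightarrow> 'a) \<Rightarrow> bool" where
  "gamma_hemiring m \<longleftrightarrow>
     (\<forall>a b c \<alpha>. m (a + b) \<alpha> c = m a \<alpha> c + m b \<alpha> c) \<and>
     (\<forall>a b c \<alpha>. m a \<alpha> (b + c) = m a \<alpha> b + m a \<alpha> c) \<and>
     (\<forall>a b \<alpha> \<beta>. m a (\<alpha> + \<beta>) b = m a \<alpha> b + m a \<beta> b) \<and>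
     (\<forall>a b c \<alpha> \<beta>. m a \<alpha> (m b \<beta> c) = m (m a \<alpha> b) \<beta> c) \<and>
     (\<forall>a \<alpha>. m 0 \<alpha> a = 0 \<and> m a \<alpha> 0 = 0) \<and>
     (\<forall>a b. m a 0 b = 0 \<and> m b 0 a = 0)"

definition gideal :: "('a::comm_monoid_add \<Rightarrow> 'g \<Rightarrow> 'a \<Rightarrow> 'a) \<Rightarrow> 'a set \<Rightarrow> bool" where
  "gideal m A \<longleftrightarrow> A \<noteq> {} \<and> (\<forall>a\<in>A. \<forall>b\<in>A. a + b \<in> A) \<and>
     (\<forall>s a \<gamma>. a \<in> A \<longrightarrow> m s \<gamma> a \<in> A \<and> m a \<gamma> s \<in> A)"

definition h_ideal :: "('a::comm_monoid_add \<Rightarrow> 'g \<Rightarrow> 'a \<Rightarrow> 'a) \<Rightarrow> 'a set \<Rightarrow> bool" where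
  "h_ideal m A \<longleftrightarrow> gideal m A \<and>
     (\<forall>x z. \<forall>a\<in>A. \<forall>b\<in>A. x + a + z = b + z \<longrightarrow> x \<in> A)"

inductive_set gamma_prod :: "('a::comm_monoid_add \<Rightarrow> 'g \<Rightarrow> 'a \<Rightarrow> 'a) \<Rightarrow> 'a set \<Rightarrow> 'a set \<Rightarrow> 'a set"
  for m H K where
  base: "h \<in> H \<Longrightarrow> k \<in> K \<Longrightarrow> m h \<gamma> k \<in> gamma_prod m H K"
| add: "u \<in> gamma_prod m H K \<Longrightarrow> v \<in> gamma_prod m H K \<Longrightarrow> u + v \<in> gamma_prod m H K"

definition prime_h_ideal :: "('a::comm_monoid_add \<Rightarrow> 'g \<Rightarrow> 'a \<Rightarrow> 'a) \<Rightarrow> 'a set \<Rightarrow> bool" where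
  "prime_h_ideal m I \<longleftrightarrow> h_ideal m I \<and> I \<noteq> UNIV \<and>
     (\<forall>H K. h_ideal m H \<longrightarrow> h_ideal m K \<longrightarrow> gamma_prod m H K \<subseteq> I \<longrightarrow> H \<subseteq> I \<or> K \<subseteq> I)"

definition char_fun :: "'a set \<Rightarrow> 'a \<Rightarrow> real" where
  "char_fun I = indicator I"

text \<open>\<langle>x,\<mu>\<rangle>(y) = inf over s, \<alpha>, \<gamma> of \<mu>(x\<alpha>s\<gamma>y).\<close>
definition fuzzy_res :: "('a \<Rightarrow> 'g \<Rightarrow> 'a \<Rightarrow> 'a) \<Rightarrow> 'a \<Rightarrow> ('a \<Rightarrow> real) \<Rightarrow> 'a \<Rightarrow> real" where
  "fuzzy_res m x \<mu> y = (INF p \<in> (UNIV :: ('a \<times> 'g \<times> 'g) set).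
       \<mu> (m (m x (fst (snd p)) (fst p)) (snd (snd p)) y))"

end

theory Submission
  imports Defs
begin

text \<open>\<open>\<langle>x,\<lambda>\<^sub>I\<rangle>\<close> is the characteristic function of the residual
  \<open>(I : x\<Gamma>S\<Gamma>) = {y. x\<alpha>s\<gamma>y \<in> I for all s, \<alpha>, \<gamma>}\<close>, so it suffices to show that this
  residual equals \<open>I\<close>. It is an h-ideal \<open>M\<close>, and the left residual \<open>H = (I : \<Gamma>M)\<close> is an h-ideal
  containing every \<open>x\<alpha>s\<close> with \<open>H\<Gamma>M \<subseteq> I\<close>. Primeness gives \<open>M \<subseteq> I\<close> unless \<open>H \<subseteq> I\<close>; in the
  latter case \<open>x\<Gamma>S \<subseteq> I\<close>, and primeness applied to \<open>(I : \<Gamma>S)\<Gamma>S \<subseteq> I\<close> forces \<open>x \<in> I\<close>.\<close>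

definition right_residual :: "('a \<Rightarrow> 'g \<Rightarrow> 'a \<Rightarrow> 'a) \<Rightarrow> 'a set \<Rightarrow> 'a set \<Rightarrow> 'a set" where
  "right_residual m A I = {k. \<forall>a\<in>A. \<forall>\<gamma>. m a \<gamma> k \<in> I}"

definition left_residual :: "('a \<Rightarrow> 'g \<Rightarrow> 'a \<Rightarrow> 'a) \<Rightarrow> 'a set \<Rightarrow> 'a set \<Rightarrow> 'a set" where
  "left_residual m A I = {h. \<forall>a\<in>A. \<forall>\<gamma>. m h \<gamma> a \<in> I}"

definition gamma_op :: "('a \<Rightarrow> 'g \<Rightarrow> 'a \<Rightarrow> 'a) \<Rightarrow> 'a \<Rightarrow> 'g \<Rightarrow> 'a \<Rightarrow> 'a" where
  "gamma_op m a \<gamma> b = m b \<gamma> a"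

context
  fixes m :: "'a::comm_monoid_add \<Rightarrow> 'g::comm_monoid_add \<Rightarrow> 'a \<Rightarrow> 'a"
  assumes hemiring: "gamma_hemiring m"
begin

lemma gamma_distrib_left: "m a \<alpha> (b + c) = m a \<alpha> b + m a \<alpha> c"
  using hemiring by (simp add: gamma_hemiring_def)

lemma gamma_assoc: "m (m a \<alpha> b) \<beta> c = m a \<alpha> (m b \<beta> c)"
  using hemiring by (simp add: gamma_hemiring_def)

lemma gamma_zero_left: "m 0 \<alpha> a = 0"
  and gamma_zero_right: "m a \<alpha> 0 = 0"
  using hemiring by (simp_all add: gamma_hemiring_def)

lemma zero_mem_gideal: "gideal m I \<Longrightarrow> 0 \<in> I"
  unfolding gideal_def by (metis all_not_in_conv gamma_zero_left)

lemma h_ideal_right_residual: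
  assumes I: "h_ideal m I"
    and A_closed: "\<And>a \<gamma> s. a \<in> A \<Longrightarrow> m a \<gamma> s \<in> A"
  shows "h_ideal m (right_residual m A I)"
  unfolding h_ideal_def gideal_def
proof (intro conjI allI ballI impI)
  have I_ideal: "gideal m I" using I unfolding h_ideal_def by blast
  then have "0 \<in> right_residual m A I"
    by (simp add: right_residual_def gamma_zero_right zero_mem_gideal)
  then show "right_residual m A I \<noteq> {}" by blast
  fix k assume k: "k \<in> right_residual m A I"
  {
    fix l assume "l \<in> right_residual m A I"
    with k I_ideal show "k + l \<in> right_residual m A I"
      by (auto simp: right_residual_def gideal_def gamma_distrib_left)
  }
  fix s \<gamma>
  show "m s \<gamma> k \<in> right_residual m A I"
    using k A_closed by (auto simp flip: gamma_assoc simp: right_residual_def)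
  show "m k \<gamma> s \<in> right_residual m A I"
    using k I_ideal by (auto simp flip: gamma_assoc simp: right_residual_def gideal_def)
next
  fix x z k l
  assume k: "k \<in> right_residual m A I" and l: "l \<in> right_residual m A I"
    and eq: "x + k + z = l + z"
  show "x \<in> right_residual m A I"
    unfolding right_residual_def
  proof (intro CollectI ballI allI)
    fix a \<gamma> assume "a \<in> A"
    have "m a \<gamma> x + m a \<gamma> k + m a \<gamma> z = m a \<gamma> l + m a \<gamma> z"
      using arg_cong[OF eq, of "m a \<gamma>"] by (simp add: gamma_distrib_left)
    with k l \<open>a \<in> A\<close> I show "m a \<gamma> x \<in> I"
      unfolding right_residual_def h_ideal_def by blast
  qed
qed

end

lemma gamma_hemiring_op: "gamma_hemiring m \<Longrightarrow> gamma_hemiring (gamma_op m)"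
  unfolding gamma_hemiring_def gamma_op_def by (simp add: add.commute)

lemma h_ideal_op_iff: "h_ideal (gamma_op m) I \<longleftrightarrow> h_ideal m I"
  unfolding h_ideal_def gideal_def gamma_op_def by blast

lemma left_residual_eq_right_residual_op: "left_residual m A I = right_residual (gamma_op m) A I"
  unfolding left_residual_def right_residual_def gamma_op_def by simp

lemma h_ideal_left_residual:
  assumes "gamma_hemiring m" "h_ideal m I"
    and "\<And>a \<gamma> s. a \<in> A \<Longrightarrow> m s \<gamma> a \<in> A"
  shows "h_ideal m (left_residual m A I)"
  using h_ideal_right_residual[OF gamma_hemiring_op, of m I A] assms
  by (simp add: left_residual_eq_right_residual_op h_ideal_op_iff gamma_op_def)

lemma h_ideal_add: "h_ideal m I \<Longrightarrow> a \<in> I \<Longrightarrow> b \<in> I \<Longrightarrow> a + b \<in> I"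
  and h_ideal_mult_left: "h_ideal m I \<Longrightarrow> a \<in> I \<Longrightarrow> m s \<gamma> a \<in> I"
  unfolding h_ideal_def gideal_def by blast+

lemma gamma_prod_subset:
  assumes "\<And>a b. a \<in> I \<Longrightarrow> b \<in> I \<Longrightarrow> a + b \<in> I"
    and "\<And>h k \<gamma>. h \<in> H \<Longrightarrow> k \<in> K \<Longrightarrow> m h \<gamma> k \<in> I"
  shows "gamma_prod m H K \<subseteq> I"
proof
  fix u assume "u \<in> gamma_prod m H K"
  then show "u \<in> I" by induction (use assms in auto)
qed

lemma prime_h_idealD:
  assumes "prime_h_ideal m I" "h_ideal m H" "h_ideal m K"
    and "\<And>h k \<gamma>. h \<in> H \<Longrightarrow> k \<in> K \<Longrightarrow> m h \<gamma> k \<in> I"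
  shows "H \<subseteq> I \<or> K \<subseteq> I"
proof -
  have "h_ideal m I" using assms(1) unfolding prime_h_ideal_def by blast
  then have "gamma_prod m H K \<subseteq> I"
    using assms(4) by (intro gamma_prod_subset) (blast intro: h_ideal_add)+
  with assms(1-3) show ?thesis unfolding prime_h_ideal_def by blast
qed

lemma prime_h_ideal_left_cancel:
  assumes hemiring: "gamma_hemiring m" and prime: "prime_h_ideal m I"
    and k: "\<And>\<gamma> s. m k \<gamma> s \<in> I"
  shows "k \<in> I"
proof -
  have I: "h_ideal m I" and proper: "\<not> UNIV \<subseteq> I"
    using prime unfolding prime_h_ideal_def by auto
  have UNIV: "h_ideal m UNIV" unfolding h_ideal_def gideal_def by simp
  have "h_ideal m (left_residual m UNIV I)"
    using h_ideal_left_residual[OF hemiring I] by blast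
  then have "left_residual m UNIV I \<subseteq> I \<or> UNIV \<subseteq> I"
    by (rule prime_h_idealD[OF prime _ UNIV]) (simp add: left_residual_def)
  moreover have "k \<in> left_residual m UNIV I" by (simp add: left_residual_def k)
  ultimately show ?thesis using proper by blast
qed

lemma right_residual_prime_h_ideal:
  assumes hemiring: "gamma_hemiring m" and prime: "prime_h_ideal m I" and x: "x \<notin> I"
  shows "right_residual m {m x \<alpha> s |\<alpha> s. True} I = I"
proof
  have I: "h_ideal m I" using prime unfolding prime_h_ideal_def by blast
  then show "I \<subseteq> right_residual m {m x \<alpha> s |\<alpha> s. True} I"
    by (auto simp: right_residual_def intro: h_ideal_mult_left)
  define M where "M = right_residual m {m x \<alpha> s |\<alpha> s. True} I"
  have "m a \<gamma> t \<in> {m x \<alpha> s |\<alpha> s. True}" if a: "a \<in> {m x \<alpha> s |\<alpha> s. True}" for a \<gamma> t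
  proof -
    obtain \<alpha> s where "a = m x \<alpha> s" using a by blast
    then have "m a \<gamma> t = m x \<alpha> (m s \<gamma> t)" by (simp add: gamma_assoc[OF hemiring])
    then show ?thesis by blast
  qed
  then have M: "h_ideal m M"
    unfolding M_def by (rule h_ideal_right_residual[OF hemiring I])
  have H: "h_ideal m (left_residual m M I)"
    using h_ideal_left_residual[OF hemiring I] h_ideal_mult_left[OF M] by blast
  have "left_residual m M I \<subseteq> I \<or> M \<subseteq> I"
    by (rule prime_h_idealD[OF prime H M]) (simp add: left_residual_def)
  moreover have "m x \<alpha> s \<in> left_residual m M I" for \<alpha> s
    by (auto simp: left_residual_def M_def right_residual_def)
  ultimately show "M \<subseteq> I"
    using prime_h_ideal_left_cancel[OF hemiring prime] x by blast
qed

lemma fuzzy_res_char_fun: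
  "fuzzy_res m x (char_fun I) = char_fun (right_residual m {m x \<alpha> s |\<alpha> s. True} I)"
proof
  fix y
  let ?f = "\<lambda>p. char_fun I (m (m x (fst (snd p)) (fst p)) (snd (snd p)) y)"
  have fuzzy_res_y: "fuzzy_res m x (char_fun I) y = (INF p. ?f p)"
    unfolding fuzzy_res_def ..
  show "fuzzy_res m x (char_fun I) y = char_fun (right_residual m {m x \<alpha> s |\<alpha> s. True} I) y"
  proof (cases "y \<in> right_residual m {m x \<alpha> s |\<alpha> s. True} I")
    case True
    then have "\<forall>\<alpha> s \<gamma>. m (m x \<alpha> s) \<gamma> y \<in> I" by (auto simp: right_residual_def)
    then have "?f p = 1" for p by (simp add: char_fun_def)
    then have "(INF p. ?f p) = 1" by (simp add: cINF_const)
    with True show ?thesis unfolding fuzzy_res_y by (simp add: char_fun_def)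
  next
    case False
    then obtain \<alpha> s \<gamma> where "m (m x \<alpha> s) \<gamma> y \<notin> I" by (auto simp: right_residual_def)
    then have "?f (s, \<alpha>, \<gamma>) = 0" by (simp add: char_fun_def)
    moreover have "bdd_below (range ?f)"
      by (rule bdd_belowI[where m = 0]) (auto simp: char_fun_def)
    ultimately have "(INF p. ?f p) \<le> 0" using cINF_lower[of ?f UNIV "(s, \<alpha>, \<gamma>)"] by simp
    moreover have "0 \<le> (INF p. ?f p)" by (rule cINF_greatest) (auto simp: char_fun_def)
    ultimately show ?thesis using False unfolding fuzzy_res_y by (simp add: char_fun_def)
  qed
qed

theorem corollary3p23:
  fixes m :: "'a::comm_monoid_add \<Rightarrow> 'g::comm_monoid_add \<Rightarrow> 'a \<Rightarrow> 'a"
    and I :: "'a set" and x :: 'a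
  assumes "gamma_hemiring m"
    and "prime_h_ideal m I"
    and "x \<notin> I"
  shows "fuzzy_res m x (char_fun I) = char_fun I"
  using right_residual_prime_h_ideal[OF assms] by (simp add: fuzzy_res_char_fun)

end
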